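(* Let $N>1$ and let the parameter space $\Theta$ of the correlated Bernoulli random graph model be nondegenerate. Then there does not exist an unbiased estimator of the total correlation $\varrho_T$, i.e. there is no statistic $S:\mathcal{X}\to\mathbb{R}$ with $\mathbb{E}_\theta(S)=\varrho_T(\theta)$ for all $\theta\in\Theta$.
   Context: Correlated Bernoulli random graph model: fix a positive integer $N$ and let $\mathcal{R}=\{(p_1,\dots,p_N,\varrho_1,\dots,\varrho_N): p_i,\varrho_i\in[0,1]\}$; a parameter space is any $\Theta\subseteq\mathcal{R}$. For $\theta\in\Theta$, the pairs $(X_i,Y_i)$, $i=1,\dots,N$, of $\{0,1\}$-valued random variables are independent, $X_i,Y_i$ are marginally Bernoulli$(p_i)$ with Pearson correlation $\varrho_i$ (so $\mathbb{P}(X_i=Y_i=1)=p_i^2+\varrho_ip_i(1-p_i)$, $\mathbb{P}(X_i=Y_i=0)=(1-p_i)^2+\varrho_ip_i(1-p_i)$, $\mathbb{P}(X_i=1,Y_i=0)=\mathbb{P}(X_i=0,Y_i=1)=(1-\varrho_i)p_i(1-p_i)$). Sample space $\mathcal{X}=\{(x,y):x,y\in\{0,1\}^N\}$. Let $\mathcal{R}^o=\{(p_1,\dots,p_N,0,\dots,0):p_i\in\mathbb{R}\}$; $\Theta$ is nondegenerate if $\Theta\cap\mathcal{R}^o$ has an interior point relative to $\mathcal{R}^o$. Let $\mu=\frac1N\sum_i p_i$. The total correlation is $\varrho_T=1-\frac{\sum_{i=1}^N(1-\varrho_i)p_i(1-p_i)}{N\mu(1-\mu)}$ when $0<\mu<1$;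 when $\mu\in\{0,1\}$ it is defined by an arbitrary convention with value in $[0,1]$. *)

theory Defs
  imports "HOL-Analysis.Analysis"
begin

text \<open>Parameters theta = (p, rho) with p, rho :: real^'n, N = CARD('n).
  An observation is a pair (x, y) of functions 'n \<Rightarrow> bool (True = 1).\<close>

definition cb_param_space :: "((real^'n) \<times> (real^'n)) set" where
  "cb_param_space = {(p, r). \<forall>i. 0 \<le> p$i \<and> p$i \<le> 1 \<and> 0 \<le> r$i \<and> r$i \<le> 1}"

definition cb_joint :: "real \<Rightarrow> real \<Rightarrow> bool \<Rightarrow> bool \<Rightarrow> real" where
  "cb_joint p r a b =
     (if a \<and> b then p^2 + r * p * (1 - p)
      else if \<not> a \<and> \<not> b then (1 - p)^2 + r * p * (1 - p)
      else (1 - r) * p * (1 - p))"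

definition cb_prob :: "(real^'n) \<times> (real^'n) \<Rightarrow> ('n \<Rightarrow> bool) \<Rightarrow> ('n \<Rightarrow> bool) \<Rightarrow> real" where
  "cb_prob \<theta> x y = (\<Prod>i\<in>UNIV. cb_joint (fst \<theta> $ i) (snd \<theta> $ i) (x i) (y i))"

definition cb_expect :: "(real^'n) \<times> (real^'n) \<Rightarrow> (('n \<Rightarrow> bool) \<Rightarrow> ('n \<Rightarrow> bool) \<Rightarrow> real) \<Rightarrow> real" where
  "cb_expect \<theta> S = (\<Sum>x\<in>UNIV. \<Sum>y\<in>UNIV. S x y * cb_prob \<theta> x y)"

definition cb_mean :: "real^'n \<Rightarrow> real" where
  "cb_mean p = (\<Sum>i\<in>UNIV. p$i) / real CARD('n)"

text \<open>Total correlation; conv is the arbitrary convention used when mu is 0 or 1.\<close>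
definition total_corr ::
  "((real^'n) \<times> (real^'n) \<Rightarrow> real) \<Rightarrow> (real^'n) \<times> (real^'n) \<Rightarrow> real" where
  "total_corr conv \<theta> =
     (let p = fst \<theta>; r = snd \<theta>; \<mu> = cb_mean p in
      if 0 < \<mu> \<and> \<mu> < 1 then
        1 - (\<Sum>i\<in>UNIV. (1 - r$i) * p$i * (1 - p$i)) / (real CARD('n) * \<mu> * (1 - \<mu>))
      else conv \<theta>)"

text \<open>Nondegenerate: Theta \<inter> R^o has an interior point relative to R^o = {(p,0)}.\<close>
definition nondegenerate :: "((real^'n) \<times> (real^'n)) set \<Rightarrow> bool" where
  "nondegenerate \<Theta> \<longleftrightarrow> interior {p. (p, 0) \<in> \<Theta>} \<noteq> {}"

end

theory Submission
  imports Defs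
begin

text \<open>For uncorrelated edges (\<open>\<rho> = 0\<close>) the total correlation is
  \<open>(\<Sum>i. (p\<^sub>i - \<mu>)\<^sup>2) / (N \<mu> (1 - \<mu>))\<close>. Move a single coordinate of an interior
  point of \<open>\<Theta> \<inter> R\<^sup>o\<close> along a segment: there \<open>E S\<close> is a polynomial in the parameter
  \<open>t\<close>, so unbiasedness gives the polynomial identity
  \<open>E S \<cdot> N \<mu> (1 - \<mu>) = \<Sum>i. (p\<^sub>i - \<mu>)\<^sup>2\<close> on an interval and hence for every \<open>t\<close>.
  At the \<open>t\<close> where \<open>\<mu> = 0\<close> the left side vanishes, whereas the right side is
  \<open>\<Sum>i. p\<^sub>i\<^sup>2 > 0\<close>, since for \<open>N > 1\<close> some coordinate keeps its positive value.
  Only parameters with \<open>0 < \<mu> < 1\<close> are used, so the convention for \<open>\<mu> \<in> {0, 1}\<close> plays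
  no role.\<close>

lemma real_polynomial_function_eqI:
  fixes f g :: "real \<Rightarrow> real"
  assumes "real_polynomial_function f" "real_polynomial_function g"
    and "a < b" "\<And>x. x \<in> {a<..<b} \<Longrightarrow> f x = g x"
  shows "f x = g x"
proof -
  obtain c n where diff: "\<And>x. f x - g x = (\<Sum>i\<le>n. c i * x ^ i)"
    using real_polynomial_function_imp_sum[OF real_polynomial_function_diff[OF assms(1,2)]]
    unfolding fun_eq_iff by blast
  have "{a<..<b} \<subseteq> {x. (\<Sum>i\<le>n. c i * x ^ i) = 0}"
    using assms(4) by (auto simp: diff[symmetric])
  then have "infinite {x. (\<Sum>i\<le>n. c i * x ^ i) = 0}"
    using assms(3) infinite_Ioo finite_subset by blast
  then have "\<forall>k\<le>n. c k = 0"
    using polyfun_rootbound_finite by blast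
  then show ?thesis
    using diff[of x] by simp
qed

lemma real_polynomial_function_cb_joint:
  assumes "real_polynomial_function p" "real_polynomial_function r"
  shows "real_polynomial_function (\<lambda>t. cb_joint (p t) (r t) a b)"
  unfolding cb_joint_def using assms
  by (cases a; cases b; simp;
      intro real_polynomial_function.intros(2-4)
        real_polynomial_function_diff real_polynomial_function_power)

lemma real_polynomial_function_cb_expect:
  assumes "\<And>i. real_polynomial_function (\<lambda>t. fst (\<theta> t) $ i)"
    and "\<And>i. real_polynomial_function (\<lambda>t. snd (\<theta> t) $ i)"
  shows "real_polynomial_function (\<lambda>t. cb_expect (\<theta> t) S)"
  unfolding cb_expect_def cb_prob_def
  using assms by (intro real_polynomial_function_sum real_polynomial_function.intros(4)
      real_polynomial_function_prod real_polynomial_function_cb_joint) auto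

lemma real_polynomial_function_affine: "real_polynomial_function (\<lambda>t. a + t * b)"
  by (simp add: real_polynomial_function.intros bounded_linear_mult_left)

lemma real_polynomial_function_cb_expect_line:
  "real_polynomial_function (\<lambda>t. cb_expect (c + t *\<^sub>R v, r) S)"
  by (rule real_polynomial_function_cb_expect)
    (simp_all add: real_polynomial_function_affine real_polynomial_function.intros(2))

lemma total_corr_uncorrelated:
  fixes p :: "real^'n"
  defines "\<mu> \<equiv> cb_mean p"
  assumes "0 < \<mu>" "\<mu> < 1"
  shows "total_corr conv (p, 0) = (\<Sum>i\<in>UNIV. (p$i - \<mu>)^2) / (real CARD('n) * \<mu> * (1 - \<mu>))"
proof -
  let ?V = "real CARD('n) * \<mu> * (1 - \<mu>)"
  have sum_p: "(\<Sum>i\<in>UNIV. p$i) = real CARD('n) * \<mu>"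
    by (simp add: \<mu>_def cb_mean_def)
  have "(\<Sum>i\<in>UNIV. (p$i - \<mu>)^2)
      = (\<Sum>i\<in>UNIV. (p$i)^2) - 2 * \<mu> * (\<Sum>i\<in>UNIV. p$i) + real CARD('n) * \<mu>^2"
    by (simp add: power2_diff sum.distrib sum_subtractf sum_distrib_left mult_ac)
  moreover have "(\<Sum>i\<in>UNIV. p$i * (1 - p$i)) = (\<Sum>i\<in>UNIV. p$i) - (\<Sum>i\<in>UNIV. (p$i)^2)"
    by (simp add: right_diff_distrib sum_subtractf power2_eq_square)
  ultimately have numerator: "?V - (\<Sum>i\<in>UNIV. p$i * (1 - p$i)) = (\<Sum>i\<in>UNIV. (p$i - \<mu>)^2)"
    by (simp add: sum_p algebra_simps power2_eq_square)
  have "total_corr conv (p, 0) = 1 - (\<Sum>i\<in>UNIV. p$i * (1 - p$i)) / ?V"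
    using assms by (simp add: total_corr_def Let_def \<mu>_def)
  also have "\<dots> = (?V - (\<Sum>i\<in>UNIV. p$i * (1 - p$i))) / ?V"
    using assms by (simp add: diff_divide_distrib)
  finally show ?thesis
    by (simp only: numerator)
qed

lemma cb_mean_add_axis:
  "cb_mean (c + t *\<^sub>R axis i 1 :: real^'n) = cb_mean c + t / real CARD('n)"
  by (simp add: cb_mean_def sum.distrib axis_def add_divide_distrib if_distrib[of "(*) t"]
      cong: if_cong)

lemma cb_mean_in_box:
  fixes c :: "real^'n"
  assumes "c \<in> box 0 1"
  shows "0 < cb_mean c" "cb_mean c < 1"
proof -
  have "0 < c$i" "c$i < 1" for i
    using assms by (simp_all add: mem_box_cart)
  then have "0 < (\<Sum>i\<in>UNIV. c$i)" "(\<Sum>i\<in>UNIV. c$i) < (\<Sum>i\<in>(UNIV::'n set). 1)"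
    by (intro sum_pos sum_strict_mono; simp)+
  then show "0 < cb_mean c" "cb_mean c < 1"
    by (simp_all add: cb_mean_def)
qed

lemma interior_uncorrelated_slice:
  assumes "\<Theta> \<subseteq> cb_param_space"
  shows "interior {p. (p, 0) \<in> \<Theta>} \<subseteq> box 0 1"
proof -
  have "{p. (p, 0) \<in> \<Theta>} \<subseteq> cbox 0 1"
    using assms by (auto simp: cb_param_space_def mem_box_cart)
  then show ?thesis
    by (metis interior_cbox interior_mono)
qed

lemma unbiased_along_axis_polynomial_identity:
  fixes c :: "real^'n" and i :: 'n
  defines "p \<equiv> \<lambda>t. c + t *\<^sub>R axis i 1"
    and "\<mu> \<equiv> \<lambda>t. cb_mean c + t / real CARD('n)"
  assumes "c \<in> box 0 1" "d > 0"
    and unbiased: "\<And>t. \<bar>t\<bar> < d \<Longrightarrow> cb_expect (p t, 0) S = total_corr conv (p t, 0)"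
  shows "cb_expect (p t, 0) S * (real CARD('n) * \<mu> t * (1 - \<mu> t)) = (\<Sum>k\<in>UNIV. (p t $ k - \<mu> t)^2)"
proof -
  define N where "N = real CARD('n)"
  define V where "V t = N * \<mu> t * (1 - \<mu> t)" for t
  define W where "W t = (\<Sum>k\<in>UNIV. (p t $ k - \<mu> t)^2)" for t
  define \<delta> where "\<delta> = min d (min (N * cb_mean c) (N * (1 - cb_mean c)))"
  have N_pos: "N > 0"
    by (simp add: N_def)
  have \<mu>_poly: "real_polynomial_function \<mu>"
    using real_polynomial_function_affine[of "cb_mean c" "1 / real CARD('n)"] by (simp add: \<mu>_def)
  have "\<delta> > 0"
    using assms cb_mean_in_box[OF assms(3)] N_pos by (simp add: \<delta>_def)
  have "cb_expect (p t, 0) S * V t = W t"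
  proof (rule real_polynomial_function_eqI[of "\<lambda>t. cb_expect (p t, 0) S * V t" W "-\<delta>" \<delta>])
    show "real_polynomial_function (\<lambda>t. cb_expect (p t, 0) S * V t)"
      unfolding p_def V_def using \<mu>_poly
      by (intro real_polynomial_function.intros(2,4) real_polynomial_function_diff
          real_polynomial_function_cb_expect_line)
    show "real_polynomial_function W"
      unfolding W_def p_def using \<mu>_poly
      by (intro real_polynomial_function_sum real_polynomial_function_power
          real_polynomial_function_diff) (simp_all add: real_polynomial_function_affine)
  next
    fix t assume t: "t \<in> {-\<delta><..<\<delta>}"
    then have "0 < \<mu> t" "\<mu> t < 1"
      using N_pos by (auto simp: \<mu>_def N_def \<delta>_def field_simps)
    moreover have "\<bar>t\<bar> < d"
      using t by (auto simp: \<delta>_def)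
    moreover have "cb_mean (p t) = \<mu> t"
      by (simp add: \<mu>_def p_def cb_mean_add_axis)
    ultimately have "cb_expect (p t, 0) S = W t / V t"
      using unbiased total_corr_uncorrelated[of "p t"] by (simp add: W_def V_def N_def)
    with \<open>0 < \<mu> t\<close> \<open>\<mu> t < 1\<close> show "cb_expect (p t, 0) S * V t = W t"
      using N_pos by (simp add: V_def)
  qed (use \<open>\<delta> > 0\<close> in simp)
  then show ?thesis
    by (simp add: V_def W_def N_def)
qed

lemma total_corr_not_unbiased_along_axis:
  fixes c :: "real^'n"
  assumes "CARD('n) > 1" "c \<in> box 0 1" "d > 0"
  shows "\<exists>t\<in>{-d<..<d}. cb_expect (c + t *\<^sub>R axis i 1, 0) S \<noteq> total_corr conv (c + t *\<^sub>R axis i 1, 0)"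
proof (rule ccontr)
  define N where "N = real CARD('n)"
  define p where "p t = c + t *\<^sub>R axis i 1" for t
  define t0 where "t0 = - N * cb_mean c"
  assume "\<not> ?thesis"
  then have "cb_expect (c + t *\<^sub>R axis i 1, 0) S = total_corr conv (c + t *\<^sub>R axis i 1, 0)"
    if "\<bar>t\<bar> < d" for t
    using that by (auto simp: abs_less_iff)
  from unbiased_along_axis_polynomial_identity[OF assms(2,3) this, of t0]
  have "(\<Sum>k\<in>UNIV. (p t0 $ k)^2) = 0"
    by (simp add: p_def t0_def N_def)
  moreover have "card (UNIV - {i}) > 0"
    using assms(1) by (simp add: card_Diff_singleton)
  then obtain j where "j \<noteq> i"
    by (metis card_gt_0_iff Diff_iff ex_in_conv singletonI)
  then have "0 < (p t0 $ j)^2"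
    using assms(2) by (auto simp: p_def axis_def mem_box_cart less_imp_neq[symmetric])
  ultimately show False
    using member_le_sum[of j UNIV "\<lambda>k. (p t0 $ k)^2"] by simp
qed

theorem theorem5:
  fixes \<Theta> :: "((real^'n) \<times> (real^'n)) set"
    and conv :: "(real^'n) \<times> (real^'n) \<Rightarrow> real"
  assumes "CARD('n) > 1"
    and "\<Theta> \<subseteq> cb_param_space"
    and "nondegenerate \<Theta>"
    and "\<forall>\<theta>. 0 \<le> conv \<theta> \<and> conv \<theta> \<le> 1"
  shows "\<not> (\<exists>S :: ('n \<Rightarrow> bool) \<Rightarrow> ('n \<Rightarrow> bool) \<Rightarrow> real.
             \<forall>\<theta>\<in>\<Theta>. cb_expect \<theta> S = total_corr conv \<theta>)"
proof
  assume "\<exists>S :: ('n \<Rightarrow> bool) \<Rightarrow> ('n \<Rightarrow> bool) \<Rightarrow> real.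
             \<forall>\<theta>\<in>\<Theta>. cb_expect \<theta> S = total_corr conv \<theta>"
  then obtain S :: "('n \<Rightarrow> bool) \<Rightarrow> ('n \<Rightarrow> bool) \<Rightarrow> real"
    where unbiased: "\<forall>\<theta>\<in>\<Theta>. cb_expect \<theta> S = total_corr conv \<theta>" by blast
  obtain c where c: "c \<in> interior {p. (p, 0) \<in> \<Theta>}"
    using assms(3) unfolding nondegenerate_def by blast
  then obtain e where "e > 0" and ball: "ball c e \<subseteq> {p. (p, 0) \<in> \<Theta>}"
    using mem_interior by blast
  have "c \<in> box 0 1"
    using c interior_uncorrelated_slice[OF assms(2)] by blast
  then obtain t i where "t \<in> {-e<..<e}"
    and biased: "cb_expect (c + t *\<^sub>R axis i 1, 0) S \<noteq> total_corr conv (c + t *\<^sub>R axis i 1, 0)"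
    using total_corr_not_unbiased_along_axis[OF assms(1) _ \<open>e > 0\<close>] by blast
  then have "c + t *\<^sub>R axis i 1 \<in> ball c e"
    by (auto simp: dist_norm)
  with ball unbiased biased show False
    by auto
qed

end
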